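(* Let $\lambda=(\lambda_1,\dots,\lambda_r)$ be a partition of $n\ge1$. The Sprague–Grundy value $\mathbb{SG}(\mathcal{L}(\lambda))$ can be computed in $O(\log r)\le O(\log n)$ time units.
   Context: A partition of $n$ is a non-increasing sequence $\lambda_1\ge\dots\ge\lambda_r>0$ of integers with sum $n$, given as input as the list $(\lambda_1,\dots,\lambda_r)$ with random access to its entries; $()$ is the empty partition. For non-negative $i,j$, $\lambda[i,j]$ is $(\lambda_{i+1}-j,\dots,\lambda_r-j)$ with all non-positive entries removed. LCTR: positions $\mathcal{L}(\mu)$; if $\mu\neq()$ the two moves go to $\mathcal{L}(\mu[1,0])$ and $\mathcal{L}(\mu[0,1])$; $\mathcal{L}(())$ is terminal. Normal play; $\mathbb{SG}(A)=\operatorname{mex}\{\mathbb{SG}(B):A\to B\}$. A time unit is any of: reading one integer (entry) of the input, one basic arithmetic operation on integers (addition, subtraction, multiplication or division by 2, parity, comparison), or computing the mex of a set of at most two integers from $\{0,1,2\}$. *)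

theory Defs
  imports Complex_Main
begin

definition is_partition :: "nat \<Rightarrow> nat list \<Rightarrow> bool" where
  "is_partition n lam \<longleftrightarrow> sorted_wrt (\<ge>) lam \<and> (\<forall>x\<in>set lam. 0 < x) \<and> sum_list lam = n"

definition shift :: "nat \<Rightarrow> nat \<Rightarrow> nat list \<Rightarrow> nat list" where
  "shift i j lam = filter (\<lambda>x. 0 < x) (map (\<lambda>x. x - j) (drop i lam))"

definition mex :: "nat set \<Rightarrow> nat" where
  "mex S = (LEAST m. m \<notin> S)"

text \<open>Sprague-Grundy value of the LCTR position L(mu):
  the empty partition is terminal; otherwise the moves go to mu[1,0] and mu[0,1].\<close>
function sg :: "nat list \<Rightarrow> nat" where
  "sg [] = 0"
| "sg (x # xs) = mex {sg (shift 1 0 (x # xs)), sg (shift 0 1 (x # xs))}"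
  by pat_completeness auto
termination
proof (relation "measure (\<lambda>l. sum_list l + length l)")
  show "wf (measure (\<lambda>l. sum_list l + length l))" by simp
next
  fix x :: nat and xs
  show "(shift 1 0 (x # xs), x # xs) \<in> measure (\<lambda>l. sum_list l + length l)"
  proof -
    have "sum_list (filter ((<) 0) l) \<le> sum_list l" for l :: "nat list"
      by (induction l) auto
    moreover have "length (filter ((<) 0) xs) \<le> length xs" by simp
    ultimately have "sum_list (filter ((<) 0) xs) + length (filter ((<) 0) xs) \<le> sum_list xs + length xs"
      by (meson add_mono)
    then show ?thesis by (simp add: shift_def)
  qed
next
  fix x :: nat and xs :: "nat list"
  have key: "sum_list (filter (\<lambda>y. 0 < y) (map (\<lambda>y. y - 1) l)) + length (filter (\<lambda>y. 0 < y) (map (\<lambda>y. y - 1) l))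
             \<le> sum_list l" for l :: "nat list"
    by (induction l) auto
  have "sum_list (filter (\<lambda>y. 0 < y) (map (\<lambda>y. y - 1) (x#xs))) + length (filter (\<lambda>y. 0 < y) (map (\<lambda>y. y - 1) (x#xs)))
        < sum_list (x#xs) + length (x#xs)"
    using key[of "x#xs"] by simp
  then show "(shift 0 1 (x # xs), x # xs) \<in> measure (\<lambda>l. sum_list l + length l)"
    by (simp add: shift_def)
qed

text \<open>Every executed instruction
  costs one time unit. Control flow (jumps, constants, moves)
  is also charged one unit each; since a program is a fixed finite list, this changes
  costs only by a constant factor.\<close>
datatype instr =
    Const nat int
  | Mov nat nat
  | Add nat nat nat
  | Sub nat nat nat
  | Mul nat nat nat
  | Half nat nat
  | Par nat nat
  | Lt nat nat nat
  | Eq nat nat nat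
  | Mex nat nat nat
  | Read nat nat
  | Jmp nat
  | Jz nat nat

type_synonym state = "nat \<times> (nat \<Rightarrow> int)"

definition mex_int :: "int \<Rightarrow> int \<Rightarrow> int" where
  "mex_int a b = int (LEAST m::nat. int m \<noteq> a \<and> int m \<noteq> b)"

fun exec :: "int list \<Rightarrow> instr \<Rightarrow> state \<Rightarrow> state" where
  "exec xs (Const d c) (pc, r) = (Suc pc, r(d := c))"
| "exec xs (Mov d a) (pc, r) = (Suc pc, r(d := r a))"
| "exec xs (Add d a b) (pc, r) = (Suc pc, r(d := r a + r b))"
| "exec xs (Sub d a b) (pc, r) = (Suc pc, r(d := r a - r b))"
| "exec xs (Mul d a b) (pc, r) = (Suc pc, r(d := r a * r b))"
| "exec xs (Half d a) (pc, r) = (Suc pc, r(d := r a div 2))"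
| "exec xs (Par d a) (pc, r) = (Suc pc, r(d := r a mod 2))"
| "exec xs (Lt d a b) (pc, r) = (Suc pc, r(d := (if r a < r b then 1 else 0)))"
| "exec xs (Eq d a b) (pc, r) = (Suc pc, r(d := (if r a = r b then 1 else 0)))"
| "exec xs (Mex d a b) (pc, r) = (Suc pc, r(d := mex_int (r a) (r b)))"
| "exec xs (Read d a) (pc, r) =
     (Suc pc, r(d := (if 0 \<le> r a \<and> r a < int (length xs) then xs ! nat (r a) else 0)))"
| "exec xs (Jmp t) (pc, r) = (t, r)"
| "exec xs (Jz a t) (pc, r) = (if r a = 0 then t else Suc pc, r)"

definition halted :: "instr list \<Rightarrow> state \<Rightarrow> bool" where
  "halted p s \<longleftrightarrow> length p \<le> fst s"

definition step :: "instr list \<Rightarrow> int list \<Rightarrow> state \<Rightarrow> state" where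
  "step p xs s = (if halted p s then s else exec xs (p ! fst s) s)"

definition init :: "int list \<Rightarrow> state" where
  "init xs = (0, (\<lambda>_. 0)(0 := int (length xs)))"

definition runs_within :: "instr list \<Rightarrow> int list \<Rightarrow> nat \<Rightarrow> int \<Rightarrow> bool" where
  "runs_within p xs T v \<longleftrightarrow>
     (\<exists>k\<le>T. halted p ((step p xs ^^ k) (init xs)) \<and> snd ((step p xs ^^ k) (init xs)) 0 = v)"

end

theory Submission
  imports Defs
begin

text \<open>The Grundy values of the positions \<open>\<lambda>[i,j]\<close> reachable from \<open>\<lambda>\<close> form a grid over the
  Young diagram, with \<open>g(i,j) = mex {g(i+1,j), g(i,j+1)}\<close> inside the diagram and 0 outside.
  A finite check shows that such a grid is constant along the diagonal as long as the
  \<open>4 \<times> 4\<close> window at the current cell lies inside the diagram, so \<open>sg \<lambda>\<close> is the value at the cell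
  \<open>(d - 3, d - 3)\<close>, where \<open>d\<close> is the side of the Durfee square. Beyond the \<open>3 \<times> 3\<close> block at
  that cell the diagram consists of two arms of width at most 3, along which the values are
  periodic with period 2 from the third row on. Hence \<open>sg \<lambda>\<close> is a bounded computation on
  \<open>d\<close>, three row lengths and three column heights; a register machine finds \<open>d\<close> and the
  column heights by binary search over the \<open>r\<close> parts and evaluates the rest in constant time.\<close>

section \<open>The Grundy grid of a partition\<close>

definition mex2 :: "nat \<Rightarrow> nat \<Rightarrow> nat" where
  "mex2 a b = (if a \<noteq> 0 \<and> b \<noteq> 0 then 0 else if a \<noteq> 1 \<and> b \<noteq> 1 then 1 else 2)"

lemma mex2_le_2: "mex2 a b \<le> 2"
  by (simp add: mex2_def)

lemma mex2_commute: "mex2 a b = mex2 b a"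
  by (simp add: mex2_def)

lemma mex2_neq: "mex2 a b \<noteq> a" "mex2 a b \<noteq> b"
  by (simp_all add: mex2_def)

lemma mex_doubleton: "mex {a, b} = mex2 a b"
  unfolding mex_def
proof (rule Least_equality)
  show "mex2 a b \<notin> {a, b}" using mex2_neq by auto
qed (auto simp: mex2_def)

lemma mex_int_of_nat: "mex_int (int a) (int b) = int (mex2 a b)"
proof -
  have "(LEAST m. int m \<noteq> int a \<and> int m \<noteq> int b) = mex2 a b"
  proof (rule Least_equality)
    show "int (mex2 a b) \<noteq> int a \<and> int (mex2 a b) \<noteq> int b" using mex2_neq by auto
  qed (auto simp: mex2_def)
  then show ?thesis by (simp add: mex_int_def)
qed

definition entry :: "nat list \<Rightarrow> nat \<Rightarrow> nat" where
  "entry l i = (if i < length l then l ! i else 0)"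

lemma entry_antimono:
  assumes "sorted_wrt (\<ge>) l" "i \<le> i'"
  shows "entry l i' \<le> entry l i"
  using assms unfolding entry_def by (auto simp: sorted_wrt_iff_nth_less le_less)

definition sg_at :: "nat list \<Rightarrow> nat \<Rightarrow> nat \<Rightarrow> nat" where
  "sg_at l i j = sg (shift i j l)"

lemma shift_nth_Cons:
  assumes "i < length l"
  shows "shift i j l = (if j < l ! i then (l ! i - j) # shift (Suc i) j l else shift (Suc i) j l)"
  using assms unfolding shift_def by (auto simp: Cons_nth_drop_Suc[symmetric])

lemma shift_eq_Nil:
  assumes "sorted_wrt (\<ge>) l" "\<not> j < entry l i"
  shows "shift i j l = []"
proof -
  have "\<forall>x\<in>set (drop i l). x \<le> entry l i"
  proof (cases "i < length l")
    case True
    then have "drop i l = l ! i # drop (Suc i) l" by (simp add: Cons_nth_drop_Suc)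
    moreover have "sorted_wrt (\<ge>) (drop i l)" using assms(1) by (simp add: sorted_wrt_drop)
    ultimately show ?thesis using True by (auto simp: entry_def)
  qed simp
  then show ?thesis using assms(2) unfolding shift_def by (auto simp: filter_empty_conv)
qed

lemma shift_0_1_shift: "shift 0 1 (shift i j l) = shift i (Suc j) l"
proof -
  have "filter ((<) 0) (map (\<lambda>x. x - 1) (filter ((<) 0) xs)) = filter ((<) 0) (map (\<lambda>x. x - 1) xs)"
    for xs :: "nat list"
    by (induction xs) auto
  then show ?thesis unfolding shift_def by (simp add: comp_def)
qed

lemma shift_1_0_shift:
  assumes "i < length l" "j < l ! i"
  shows "shift 1 0 (shift i j l) = shift (Suc i) j l"
  using assms by (simp add: shift_nth_Cons) (simp add: shift_def)

lemma sg_at_rec: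
  assumes "sorted_wrt (\<ge>) l"
  shows "sg_at l i j = (if j < entry l i then mex2 (sg_at l (Suc i) j) (sg_at l i (Suc j)) else 0)"
proof (cases "j < entry l i")
  case True
  then have i: "i < length l" and j: "j < l ! i" by (auto simp: entry_def split: if_splits)
  have "shift i j l = (l ! i - j) # shift (Suc i) j l" using shift_nth_Cons[OF i] j by simp
  then have "sg_at l i j = mex {sg (shift 1 0 (shift i j l)), sg (shift 0 1 (shift i j l))}"
    unfolding sg_at_def by (metis sg.simps(2))
  also have "\<dots> = mex2 (sg_at l (Suc i) j) (sg_at l i (Suc j))"
    by (simp only: mex_doubleton shift_1_0_shift[OF i j] shift_0_1_shift sg_at_def)
  finally show ?thesis using True by simp
next
  case False
  then show ?thesis using shift_eq_Nil[OF assms] by (simp add: sg_at_def)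
qed

text \<open>\<open>x0, \<dots>, x3\<close> is row 3 and \<open>y0, y1, y2\<close> is column 3 of a \<open>4 \<times> 4\<close> window, and \<open>cij\<close> is
  the value of the mex recursion at cell \<open>(i, j)\<close>.\<close>
definition window_diag :: "nat \<Rightarrow> nat \<Rightarrow> nat \<Rightarrow> nat \<Rightarrow> nat \<Rightarrow> nat \<Rightarrow> nat \<Rightarrow> bool" where
  "window_diag x0 x1 x2 x3 y0 y1 y2 = (let
     c22 = mex2 x2 y2; c21 = mex2 x1 c22; c20 = mex2 x0 c21;
     c12 = mex2 c22 y1; c11 = mex2 c21 c12; c10 = mex2 c20 c11;
     c02 = mex2 c12 y0; c01 = mex2 c11 c02; c00 = mex2 c10 c01
   in c00 = c11)"

lemma window_diag_holds:
  assumes "x0 \<le> 2" "x1 \<le> 2" "x2 \<le> 2" "x3 \<le> 2" "y0 \<le> 2" "y1 \<le> 2" "y2 \<le> 2"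
    and "x0 \<noteq> x1" "x1 \<noteq> x2" "x2 \<noteq> x3" "y0 \<noteq> y1" "y1 \<noteq> y2" "y2 \<noteq> x3"
  shows "window_diag x0 x1 x2 x3 y0 y1 y2"
proof -
  have all: "\<forall>x3\<in>{0,1,2}. \<forall>x2\<in>{0,1,2}. x2 \<noteq> x3 \<longrightarrow> (\<forall>x1\<in>{0,1,2}. x1 \<noteq> x2 \<longrightarrow>
    (\<forall>x0\<in>{0,1,2}. x0 \<noteq> x1 \<longrightarrow> (\<forall>y2\<in>{0,1,2}. y2 \<noteq> x3 \<longrightarrow>
    (\<forall>y1\<in>{0,1,2}. y1 \<noteq> y2 \<longrightarrow> (\<forall>y0\<in>{0,1,2::nat}. y0 \<noteq> y1 \<longrightarrow> window_diag x0 x1 x2 x3 y0 y1 y2)))))"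
    by code_simp
  show ?thesis using assms by (intro all[rule_format]) auto
qed

text \<open>Unfolding the recursion expresses both values through the seven border values of the
  window, which are at most 2 and differ from their neighbours; the finitely many cases are
  checked by evaluation.\<close>
lemma mex_grid_diagonal:
  fixes f :: "nat \<Rightarrow> nat \<Rightarrow> nat"
  assumes rec: "\<And>i j. i < 4 \<Longrightarrow> j < 4 \<Longrightarrow> f i j = mex2 (f (Suc i) j) (f i (Suc j))"
  shows "f 0 0 = f 1 1"
proof -
  have le: "f i j \<le> 2" if "i < 4" "j < 4" for i j using rec[OF that] mex2_le_2 by metis
  have ne: "f i j \<noteq> f i (Suc j)" "f i j \<noteq> f (Suc i) j" if "i < 4" "j < 4" for i j
    using rec[OF that] mex2_neq by metis+
  have "window_diag (f 3 0) (f 3 1) (f 3 2) (f 3 3) (f 0 3) (f 1 3) (f 2 3)"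
    using le[of 3 0] le[of 3 1] le[of 3 2] le[of 3 3] le[of 0 3] le[of 1 3] le[of 2 3]
      ne(1)[of 3 0] ne(1)[of 3 1] ne(1)[of 3 2] ne(2)[of 0 3] ne(2)[of 1 3] ne(2)[of 2 3]
    by (intro window_diag_holds) (simp_all add: numeral_eq_Suc)
  moreover have "f 0 0 = mex2 (f 1 0) (f 0 1)" "f 0 1 = mex2 (f 1 1) (f 0 2)"
    "f 0 2 = mex2 (f 1 2) (f 0 3)" "f 1 0 = mex2 (f 2 0) (f 1 1)" "f 1 1 = mex2 (f 2 1) (f 1 2)"
    "f 1 2 = mex2 (f 2 2) (f 1 3)" "f 2 0 = mex2 (f 3 0) (f 2 1)" "f 2 1 = mex2 (f 3 1) (f 2 2)"
    "f 2 2 = mex2 (f 3 2) (f 2 3)"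
    by (simp_all add: rec numeral_eq_Suc)
  ultimately show ?thesis unfolding window_diag_def Let_def by simp
qed

lemma sg_at_diagonal:
  assumes l: "sorted_wrt (\<ge>) l" and inside: "j + 3 < entry l (i + 3)"
  shows "sg_at l i j = sg_at l (Suc i) (Suc j)"
proof -
  have "(\<lambda>a b. sg_at l (i + a) (j + b)) 0 0 = (\<lambda>a b. sg_at l (i + a) (j + b)) 1 1"
  proof (rule mex_grid_diagonal[of "\<lambda>a b. sg_at l (i + a) (j + b)"])
    fix a b :: nat assume ab: "a < 4" "b < 4"
    have "entry l (i + 3) \<le> entry l (i + a)" using entry_antimono[OF l] ab by simp
    then show "sg_at l (i + a) (j + b) =
        mex2 (sg_at l (i + Suc a) (j + b)) (sg_at l (i + a) (j + Suc b))"
      using sg_at_rec[OF l, of "i + a" "j + b"] inside ab by simp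
  qed
  then show ?thesis by simp
qed

text \<open>The diagonal is followed down to three cells before the corner of the Durfee square (for
  \<open>d < 3\<close> the truncated subtraction leaves the cell \<open>(0, 0)\<close>).\<close>
lemma sg_eq_sg_at_Durfee:
  assumes lam: "is_partition n lam" and durfee: "\<And>i. i < d \<Longrightarrow> i < entry lam i"
  shows "sg lam = sg_at lam (d - 3) (d - 3)"
proof -
  have l: "sorted_wrt (\<ge>) lam" and pos: "\<forall>x\<in>set lam. 0 < x"
    using lam by (auto simp: is_partition_def)
  have "sg_at lam 0 0 = sg_at lam k k" if "k \<le> d - 3" for k
    using that
  proof (induction k)
    case (Suc k)
    then have "k + 3 < entry lam (k + 3)" using durfee[of "k + 3"] by simp
    with Suc show ?case using sg_at_diagonal[OF l] by simp
  qed simp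
  moreover have "shift 0 0 lam = lam" using pos by (simp add: shift_def filter_id_conv)
  ultimately show ?thesis by (simp add: sg_at_def)
qed

section \<open>The corner of the Durfee square\<close>

text \<open>One row of a strip of width 3 in which the first \<open>k\<close> cells of the row belong to the
  diagram, computed from the values of the row below it; the cell right of the strip is outside
  the diagram, so it contributes the value 0.\<close>
definition strip_step :: "nat \<Rightarrow> nat \<times> nat \<times> nat \<Rightarrow> nat \<times> nat \<times> nat" where
  "strip_step k = (\<lambda>(x0, x1, x2).
     let y2 = (if 3 \<le> k then mex2 x2 0 else 0);
         y1 = (if 2 \<le> k then mex2 x1 y2 else 0);
         y0 = (if 1 \<le> k then mex2 x0 y1 else 0)
     in (y0, y1, y2))"

text \<open>The values in row 3 of a mex-recursive strip of width 3 whose columns have heights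
  \<open>e0 \<ge> e1 \<ge> e2\<close>, obtained by applying \<open>strip_step\<close> from the bottom of the strip upwards.\<close>
definition arm_border :: "nat \<Rightarrow> nat \<Rightarrow> nat \<Rightarrow> nat \<times> nat \<times> nat" where
  "arm_border e0 e1 e2 = (strip_step 3 ^^ (e2 - 3))
     ((strip_step 2 ^^ ((e1 - 3) - (e2 - 3))) ((strip_step 1 ^^ ((e0 - 3) - (e1 - 3))) (0, 0, 0)))"

lemma mex_grid_arm:
  fixes f :: "nat \<Rightarrow> nat \<Rightarrow> nat" and e :: "nat \<Rightarrow> nat"
  assumes rec: "\<And>i j. 3 \<le> i \<Longrightarrow> j < 3 \<Longrightarrow>
      f i j = (if i < e j then mex2 (f (Suc i) j) (f i (Suc j)) else 0)"
    and right: "\<And>i. 3 \<le> i \<Longrightarrow> f i 3 = 0"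
    and e: "e 1 \<le> e 0" "e 2 \<le> e 1"
  shows "(f 3 0, f 3 1, f 3 2) = arm_border (e 0) (e 1) (e 2)"
proof -
  define row where "row i = (f i 0, f i 1, f i 2)" for i
  define width where
    "width i = (if i < e 2 then 3 else if i < e 1 then 2 else if i < e 0 then 1 else 0 :: nat)"
    for i
  have row_step: "row i = strip_step (width i) (row (Suc i))" if "3 \<le> i" for i
    using rec[OF that, of 0] rec[OF that, of 1] rec[OF that, of 2] right[OF that] e
    unfolding row_def width_def strip_step_def Let_def by (auto simp: numeral_eq_Suc)
  have rows: "row s = (strip_step k ^^ (t - s)) (row t)"
    if "3 \<le> s" "s \<le> t" "\<And>i. s \<le> i \<Longrightarrow> i < t \<Longrightarrow> width i = k" for s t k
    using that
  proof (induction "t - s" arbitrary: s)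
    case (Suc n)
    then have "row s = strip_step k (row (Suc s))" using row_step[of s] by simp
    also have "row (Suc s) = (strip_step k ^^ (t - Suc s)) (row t)" using Suc by simp
    finally show ?case using Suc.hyps(2) by (simp flip: Suc_diff_Suc)
  qed simp
  define b where "b j = max 3 (e j)" for j
  have "row 3 = (strip_step 3 ^^ (b 2 - 3)) (row (b 2))"
    by (rule rows) (auto simp: width_def b_def)
  also have "row (b 2) = (strip_step 2 ^^ (b 1 - b 2)) (row (b 1))"
    by (rule rows) (use e in \<open>auto simp: width_def b_def\<close>)
  also have "row (b 1) = (strip_step 1 ^^ (b 0 - b 1)) (row (b 0))"
    by (rule rows) (use e in \<open>auto simp: width_def b_def\<close>)
  also have "row (b 0) = (0, 0, 0)"
    using rec[of "b 0" 0] rec[of "b 0" 1] rec[of "b 0" 2] e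
    by (auto simp: row_def b_def numeral_eq_Suc)
  finally show ?thesis
    unfolding row_def arm_border_def b_def by (simp add: max_def)
qed

text \<open>The value at the corner of a \<open>3 \<times> 3\<close> block with row lengths \<open>a0, a1, a2\<close>, given the
  values \<open>w\<close> in the column to its right and \<open>v\<close> in the row below it.\<close>
definition corner_value :: "nat \<Rightarrow> nat \<Rightarrow> nat \<Rightarrow> nat \<times> nat \<times> nat \<Rightarrow> nat \<times> nat \<times> nat \<Rightarrow> nat" where
  "corner_value a0 a1 a2 w v = (case w of (w0, w1, w2) \<Rightarrow> case v of (v0, v1, v2) \<Rightarrow> let
     c22 = (if 2 < a2 then mex2 v2 w2 else 0); c21 = (if 1 < a2 then mex2 v1 c22 else 0);
     c20 = (if 0 < a2 then mex2 v0 c21 else 0);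
     c12 = (if 2 < a1 then mex2 c22 w1 else 0); c11 = (if 1 < a1 then mex2 c21 c12 else 0);
     c10 = (if 0 < a1 then mex2 c20 c11 else 0);
     c02 = (if 2 < a0 then mex2 c12 w0 else 0); c01 = (if 1 < a0 then mex2 c11 c02 else 0);
     c00 = (if 0 < a0 then mex2 c10 c01 else 0)
   in c00)"

text \<open>Since the fourth row has at most three cells, the diagram outside the \<open>3 \<times> 3\<close> corner
  block consists of two arms of width at most 3, which enter the corner value only through their
  border triples.\<close>
lemma mex_grid_corner:
  fixes g :: "nat \<Rightarrow> nat \<Rightarrow> nat" and a c :: "nat \<Rightarrow> nat"
  assumes rec: "\<And>i j. g i j = (if j < a i then mex2 (g (Suc i) j) (g i (Suc j)) else 0)"
    and a_antimono: "\<And>i. a (Suc i) \<le> a i" and a3: "a 3 \<le> 3"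
    and conjugate: "\<And>i k. k < 3 \<Longrightarrow> k < a i \<longleftrightarrow> i < c k"
  shows "g 0 0 = corner_value (a 0) (a 1) (a 2) (arm_border (a 0) (a 1) (a 2))
    (arm_border (c 0) (c 1) (c 2))"
proof -
  have "antimono a" using a_antimono by (simp add: antimono_iff_le_Suc)
  then have a_le: "a j \<le> a i" if "i \<le> j" for i j using that by (simp add: antimono_def)
  have "((\<lambda>i j. g j i) 3 0, (\<lambda>i j. g j i) 3 1, (\<lambda>i j. g j i) 3 2) = arm_border (a 0) (a 1) (a 2)"
  proof (rule mex_grid_arm)
    show "g j i = (if i < a j then mex2 (g j (Suc i)) (g (Suc j) i) else 0)" for i j
      using rec[of j i] by (simp add: mex2_commute)
    show "g 3 i = 0" if "3 \<le> i" for i using rec[of 3 i] a3 that by simp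
  qed (use a_antimono[of 0] a_antimono[of 1] in \<open>simp_all add: numeral_eq_Suc\<close>)
  then have right: "(g 0 3, g 1 3, g 2 3) = arm_border (a 0) (a 1) (a 2)" by simp
  have c_antimono: "c (Suc k) \<le> c k" if "k < 2" for k
    using conjugate[of "Suc k" "c k"] conjugate[of k "c k"] that by (cases "c (Suc k) \<le> c k") auto
  have below: "(g 3 0, g 3 1, g 3 2) = arm_border (c 0) (c 1) (c 2)"
  proof (rule mex_grid_arm)
    show "g i j = (if i < c j then mex2 (g (Suc i) j) (g i (Suc j)) else 0)" if "j < 3" for i j
      using rec[of i j] conjugate[OF that, of i] by simp
    show "g i 3 = 0" if "3 \<le> i" for i using rec[of i 3] a_le[OF that] a3 by simp
  qed (use c_antimono[of 0] c_antimono[of 1] in \<open>simp_all add: numeral_eq_Suc\<close>)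
  have "g 0 0 = (if 0 < a 0 then mex2 (g 1 0) (g 0 1) else 0)"
    "g 0 1 = (if 1 < a 0 then mex2 (g 1 1) (g 0 2) else 0)"
    "g 0 2 = (if 2 < a 0 then mex2 (g 1 2) (g 0 3) else 0)"
    "g 1 0 = (if 0 < a 1 then mex2 (g 2 0) (g 1 1) else 0)"
    "g 1 1 = (if 1 < a 1 then mex2 (g 2 1) (g 1 2) else 0)"
    "g 1 2 = (if 2 < a 1 then mex2 (g 2 2) (g 1 3) else 0)"
    "g 2 0 = (if 0 < a 2 then mex2 (g 3 0) (g 2 1) else 0)"
    "g 2 1 = (if 1 < a 2 then mex2 (g 3 1) (g 2 2) else 0)"
    "g 2 2 = (if 2 < a 2 then mex2 (g 3 2) (g 2 3) else 0)"
    using rec[of 0 0] rec[of 0 1] rec[of 0 2] rec[of 1 0] rec[of 1 1] rec[of 1 2] rec[of 2 0]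
      rec[of 2 1] rec[of 2 2]
    by (simp_all add: numeral_eq_Suc)
  then show ?thesis unfolding right[symmetric] below[symmetric] corner_value_def Let_def prod.case
    by (simp only:)
qed

text \<open>By \<open>sg_eq_sg_at_Durfee\<close>, the corner is the cell \<open>(d - 3, d - 3)\<close>, where \<open>d\<close> is the side of
  the Durfee square; \<open>c k\<close> is the height of column \<open>d - 3 + k\<close>.\<close>
lemma sg_eq_corner_value:
  fixes d :: nat
  defines "m \<equiv> d - 3"
  assumes lam: "is_partition n lam"
    and durfee: "\<And>i. i < d \<Longrightarrow> i < entry lam i" "\<not> d < entry lam d"
    and column: "\<And>k i. k < 3 \<Longrightarrow> i < c k \<longleftrightarrow> m + k + 1 \<le> entry lam i"
  shows "sg lam = corner_value (entry lam m - m) (entry lam (m + 1) - m) (entry lam (m + 2) - m)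
    (arm_border (entry lam m - m) (entry lam (m + 1) - m) (entry lam (m + 2) - m))
    (arm_border (c 0 - m) (c 1 - m) (c 2 - m))"
proof -
  have l: "sorted_wrt (\<ge>) lam" using lam by (simp add: is_partition_def)
  have "entry lam (m + 3) \<le> m + 3"
  proof (cases "3 \<le> d")
    case False
    then have "entry lam 3 \<le> entry lam d" using entry_antimono[OF l, of d 3] by simp
    with False durfee(2) show ?thesis by (simp add: m_def)
  qed (use durfee(2) in \<open>simp add: m_def\<close>)
  moreover have "k < entry lam (m + i) - m \<longleftrightarrow> i < c k - m" if "k < 3" for i k
    using column[OF that, of "m + i"] by auto
  ultimately have "sg_at lam m m = corner_value (entry lam m - m) (entry lam (m + 1) - m)
    (entry lam (m + 2) - m)
    (arm_border (entry lam m - m) (entry lam (m + 1) - m) (entry lam (m + 2) - m))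
    (arm_border (c 0 - m) (c 1 - m) (c 2 - m))"
    using mex_grid_corner[of "\<lambda>i j. sg_at lam (m + i) (m + j)" "\<lambda>i. entry lam (m + i) - m"
        "\<lambda>k. c k - m"] sg_at_rec[OF l, of "m + _" "m + _"] entry_antimono[OF l]
    by (simp add: less_diff_conv add.commute add.left_commute diff_le_mono)
  then show ?thesis using sg_eq_sg_at_Durfee[OF lam durfee(1)] by (simp add: m_def)
qed

definition reduce_count :: "nat \<Rightarrow> nat" where
  "reduce_count n = (if n \<le> 4 then n else 3 + (n + 1) mod 2)"

lemma reduce_count_le_4: "reduce_count n \<le> 4"
  by (simp add: reduce_count_def mod2_eq_if)

lemma funpow_reduce_count:
  fixes f :: "'a \<Rightarrow> 'a"
  assumes "(f ^^ 5) x = (f ^^ 3) x"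
  shows "(f ^^ n) x = (f ^^ reduce_count n) x"
proof (induction n rule: less_induct)
  case (less n)
  show ?case
  proof (cases "n \<le> 4")
    case False
    define m where "m = n - 5"
    with False have n: "n = m + 5" by simp
    have "(f ^^ n) x = (f ^^ m) ((f ^^ 5) x)" unfolding n by (simp add: funpow_add)
    also have "\<dots> = (f ^^ (m + 3)) x" by (simp add: assms funpow_add)
    also have "\<dots> = (f ^^ reduce_count (m + 3)) x" using less.IH[of "m + 3"] n by simp
    also have "reduce_count (m + 3) = reduce_count n" unfolding n reduce_count_def by presburger
    finally show ?thesis .
  qed (simp add: reduce_count_def)
qed

lemma strip_step_le_2: "strip_step k t \<in> {..2} \<times> {..2} \<times> {..2}"
  by (auto simp: strip_step_def Let_def mex2_le_2 split: prod.splits)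

lemma funpow_strip_step_le_2:
  "t \<in> {..2} \<times> {..2} \<times> {..2} \<Longrightarrow> (strip_step k ^^ n) t \<in> {..2} \<times> {..2} \<times> {..2}"
  by (cases n) (simp_all add: strip_step_le_2 del: atMost_iff)

text \<open>Along a strip the row values are periodic with period 2 from the third row on; this is what
  makes arms of any length cheap to evaluate.\<close>
lemma strip_step_pow_5:
  assumes "t \<in> {..2} \<times> {..2} \<times> {..2}"
  shows "(strip_step k ^^ 5) t = (strip_step k ^^ 3) t"
proof -
  have all: "\<forall>k\<in>{0, 1, 2, 3}. \<forall>x0\<in>{0, 1, 2}. \<forall>x1\<in>{0, 1, 2}. \<forall>x2\<in>{0, 1, 2}.
      (strip_step k ^^ 5) (x0, x1, x2) = (strip_step k ^^ 3) (x0, x1, x2)"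
    by code_simp
  obtain x0 x1 x2 where t: "t = (x0, x1, x2)" and "x0 \<le> 2" "x1 \<le> 2" "x2 \<le> 2"
    using assms by auto
  then have "x0 \<in> {0, 1, 2}" "x1 \<in> {0, 1, 2}" "x2 \<in> {0, 1, 2}" by auto
  moreover have "min k 3 \<in> {0, 1, 2, 3}" by auto
  ultimately have "(strip_step (min k 3) ^^ 5) t = (strip_step (min k 3) ^^ 3) t"
    using all unfolding t by blast
  moreover have "strip_step (min k 3) = strip_step k" by (auto simp: strip_step_def fun_eq_iff)
  ultimately show ?thesis by simp
qed

lemma arm_border_reduce_count:
  "arm_border e0 e1 e2 = (strip_step 3 ^^ reduce_count (e2 - 3))
     ((strip_step 2 ^^ reduce_count ((e1 - 3) - (e2 - 3)))
       ((strip_step 1 ^^ reduce_count ((e0 - 3) - (e1 - 3))) (0, 0, 0)))"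
proof -
  have reduce: "(strip_step k ^^ n) t = (strip_step k ^^ reduce_count n) t"
    if "t \<in> {..2} \<times> {..2} \<times> {..2}" for k n t
    by (rule funpow_reduce_count[OF strip_step_pow_5[OF that]])
  define t1 where "t1 = (strip_step 1 ^^ ((e0 - 3) - (e1 - 3))) (0, 0, 0)"
  define t2 where "t2 = (strip_step 2 ^^ ((e1 - 3) - (e2 - 3))) t1"
  have box: "(0, 0, 0) \<in> {..2::nat} \<times> {..2::nat} \<times> {..2::nat}" by simp
  then have box1: "t1 \<in> {..2} \<times> {..2} \<times> {..2}" unfolding t1_def by (rule funpow_strip_step_le_2)
  then have box2: "t2 \<in> {..2} \<times> {..2} \<times> {..2}" unfolding t2_def by (rule funpow_strip_step_le_2)
  have "arm_border e0 e1 e2 = (strip_step 3 ^^ (e2 - 3)) t2"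
    unfolding arm_border_def t2_def t1_def ..
  also have "\<dots> = (strip_step 3 ^^ reduce_count (e2 - 3)) t2"
    by (rule reduce[OF box2])
  also have "t2 = (strip_step 2 ^^ reduce_count ((e1 - 3) - (e2 - 3))) t1"
    unfolding t2_def by (rule reduce[OF box1])
  also have "t1 = (strip_step 1 ^^ reduce_count ((e0 - 3) - (e1 - 3))) (0, 0, 0)"
    unfolding t1_def by (rule reduce[OF box])
  finally show ?thesis .
qed

section \<open>Executing machine code\<close>

definition code_at :: "instr list \<Rightarrow> nat \<Rightarrow> instr list \<Rightarrow> bool" where
  "code_at p b c \<longleftrightarrow> b + length c \<le> length p \<and> (\<forall>i < length c. p ! (b + i) = c ! i)"

lemma code_at_self: "code_at p 0 p"
  by (simp add: code_at_def)

lemma code_at_append: "code_at p b (c @ d) \<longleftrightarrow> code_at p b c \<and> code_at p (b + length c) d"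
  unfolding code_at_def
  by (auto simp: nth_append add.assoc) (metis add_diff_inverse_nat nat_add_left_cancel_less)

fun relocate_instr :: "nat \<Rightarrow> instr \<Rightarrow> instr" where
  "relocate_instr b (Jmp t) = Jmp (b + t)"
| "relocate_instr b (Jz a t) = Jz a (b + t)"
| "relocate_instr b i = i"

definition relocate :: "nat \<Rightarrow> instr list \<Rightarrow> instr list" where
  "relocate b c = map (relocate_instr b) c"

lemma length_relocate [simp]: "length (relocate b c) = length c"
  by (simp add: relocate_def)

text \<open>Program counters of relocated code are written as base plus offset; keeping the sum
  folded stops the simplifier from merging the two, so that segments can be executed
  symbolically by \<open>step_code_at\<close>.\<close>
definition loc :: "nat \<Rightarrow> nat \<Rightarrow> nat" where
  "loc b i = b + i"

lemma exec_relocate_instr: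
  "exec xs (relocate_instr b ins) (b + i, r) =
    (b + fst (exec xs ins (i, r)), snd (exec xs ins (i, r)))"
  by (cases ins) auto

lemma step_code_at:
  assumes "code_at p b (relocate b c)" "i < length c"
  shows "step p xs (loc b i, r) =
    (loc b (fst (exec xs (c ! i) (i, r))), snd (exec xs (c ! i) (i, r)))"
  using assms unfolding code_at_def relocate_def step_def halted_def loc_def
  by (simp add: exec_relocate_instr)

lemma funpow_numeral: "(f ^^ numeral k) s = (f ^^ pred_numeral k) (f s)"
  by (simp add: numeral_eq_Suc funpow_Suc_right del: funpow.simps)

lemma funpow_one: "(f ^^ 1) s = f s" for f :: "'a \<Rightarrow> 'a"
  by simp

lemma funpow_chain: "(f ^^ a) s = s' \<Longrightarrow> (f ^^ b) s' = s'' \<Longrightarrow> (f ^^ (b + a)) s = s''"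
  by (simp add: funpow_add)

definition agree_outside :: "nat set \<Rightarrow> (nat \<Rightarrow> int) \<Rightarrow> (nat \<Rightarrow> int) \<Rightarrow> bool" where
  "agree_outside S r r' \<longleftrightarrow> (\<forall>q. q \<notin> S \<longrightarrow> r' q = r q)"

lemma agree_outsideD: "agree_outside S r r' \<Longrightarrow> q \<notin> S \<Longrightarrow> r' q = r q"
  by (simp add: agree_outside_def)

lemma agree_outside_trans: "agree_outside S r r' \<Longrightarrow> agree_outside S r' r'' \<Longrightarrow> agree_outside S r r''"
  by (simp add: agree_outside_def)

fun sequential :: "instr \<Rightarrow> bool" where
  "sequential (Jmp t) = False"
| "sequential (Jz a t) = False"
| "sequential i = True"

definition exec_regs :: "int list \<Rightarrow> instr \<Rightarrow> (nat \<Rightarrow> int) \<Rightarrow> nat \<Rightarrow> int" where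
  "exec_regs xs i r = snd (exec xs i (0, r))"

definition run_regs :: "int list \<Rightarrow> instr list \<Rightarrow> (nat \<Rightarrow> int) \<Rightarrow> nat \<Rightarrow> int" where
  "run_regs xs c = fold (exec_regs xs) c"

lemma run_regs_simps [simp]:
  "run_regs xs [] r = r"
  "run_regs xs (i # c) r = run_regs xs c (exec_regs xs i r)"
  "run_regs xs (c @ d) r = run_regs xs d (run_regs xs c r)"
  by (simp_all add: run_regs_def)

lemma exec_sequential: "sequential i \<Longrightarrow> exec xs i (pc, r) = (Suc pc, exec_regs xs i r)"
  by (cases i) (auto simp: exec_regs_def)

lemma relocate_sequential: "list_all sequential c \<Longrightarrow> relocate b c = c"
  unfolding relocate_def by (induction c) (auto elim: sequential.elims)

lemma steps_sequential_from:
  assumes c: "code_at p b c" "list_all sequential c" and "i \<le> length c"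
  shows "(step p xs ^^ (length c - i)) (loc b i, r) = (loc b (length c), run_regs xs (drop i c) r)"
  using assms(3)
proof (induction "length c - i" arbitrary: i r)
  case (Suc k)
  then have i: "i < length c" by simp
  have "sequential (c ! i)" using c(2) i by (simp add: list_all_length)
  then have "step p xs (loc b i, r) = (loc b (Suc i), exec_regs xs (c ! i) r)"
    using step_code_at[of p b c i] c i by (simp add: relocate_sequential exec_sequential)
  moreover have "drop i c = c ! i # drop (Suc i) c" using i by (simp add: Cons_nth_drop_Suc)
  moreover have "length c - i = Suc (length c - Suc i)" using i by simp
  ultimately show ?case using Suc.hyps i by (simp del: funpow.simps add: funpow_Suc_right)
qed simp

lemma steps_sequential:
  assumes "code_at p b c" "list_all sequential c"
  shows "(step p xs ^^ length c) (loc b 0, r) = (loc b (length c), run_regs xs c r)"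
  using steps_sequential_from[OF assms, of 0] by simp

section \<open>Binary search\<close>

text \<open>Registers: 0 holds the length \<open>n\<close> of the input and 1 the constant 1. The search keeps
  \<open>lo\<close> in register 2 and \<open>hi\<close> in register 3 with \<open>bsearch_pred lo\<close> and \<open>\<not> bsearch_pred hi\<close>
  (where \<open>n + 1\<close> counts as failing), comparing the entry with 1-based index
  \<open>mid = (lo + hi) div 2\<close> with the threshold in register \<open>t\<close>, increased by \<open>mid\<close> if \<open>s\<close> holds.\<close>
definition bsearch_code :: "nat \<Rightarrow> bool \<Rightarrow> instr list" where
  "bsearch_code t s = [Const 2 0, Add 3 0 1,
     Sub 5 3 2, Lt 8 1 5, Jz 8 16,
     Add 4 2 3, Half 4 4, Sub 5 4 1, Read 6 5,
     (if s then Add 7 t 4 else Mov 7 t),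
     Lt 8 6 7, Jz 8 14, Mov 3 4, Jmp 2, Mov 2 4, Jmp 2]"

lemma length_bsearch_code [simp]: "length (bsearch_code t s) = 16"
  by (simp add: bsearch_code_def)

definition bsearch_pred :: "int list \<Rightarrow> int \<Rightarrow> bool \<Rightarrow> nat \<Rightarrow> bool" where
  "bsearch_pred xs T s i \<longleftrightarrow> i = 0 \<or> (i \<le> length xs \<and> T + (if s then int i else 0) \<le> xs ! (i - 1))"

definition bsearch_found :: "int list \<Rightarrow> int \<Rightarrow> bool \<Rightarrow> nat \<Rightarrow> bool" where
  "bsearch_found xs T s i \<longleftrightarrow> bsearch_pred xs T s i \<and> (i = length xs \<or> \<not> bsearch_pred xs T s (Suc i))"

definition bsearch_inv :: "int list \<Rightarrow> nat \<Rightarrow> bool \<Rightarrow> int \<Rightarrow> nat \<Rightarrow> nat \<Rightarrow> (nat \<Rightarrow> int) \<Rightarrow> bool" where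
  "bsearch_inv xs t s T lo hi r \<longleftrightarrow>
     r 0 = int (length xs) \<and> r 1 = 1 \<and> r t = T \<and> r 2 = int lo \<and> r 3 = int hi \<and>
     lo < hi \<and> hi \<le> Suc (length xs) \<and> bsearch_pred xs T s lo \<and>
     (hi = Suc (length xs) \<or> \<not> bsearch_pred xs T s hi)"

lemma bsearch_exit:
  assumes c: "code_at p b (relocate b (bsearch_code t s))"
    and inv: "bsearch_inv xs t s T lo (Suc lo) r"
  shows "\<exists>r'. (step p xs ^^ 3) (loc b 2, r) = (loc b 16, r') \<and> r' 2 = int lo \<and>
    bsearch_found xs T s lo \<and> agree_outside {2..8} r r'"
proof -
  have "r 1 = 1" "r 3 - r 2 = 1" "r 2 = int lo" using inv by (auto simp: bsearch_inv_def)
  then have "\<exists>r'. (step p xs ^^ 3) (loc b 2, r) = (loc b 16, r') \<and> r' 2 = int lo \<and>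
      agree_outside {2..8} r r'"
    by (simp add: funpow_numeral funpow_one step_code_at[OF c] bsearch_code_def agree_outside_def)
  moreover have "bsearch_found xs T s lo"
    using inv by (auto simp: bsearch_inv_def bsearch_found_def)
  ultimately show ?thesis by blast
qed

lemma bsearch_halve:
  assumes c: "code_at p b (relocate b (bsearch_code t s))" and t: "t \<notin> {2..8}"
    and inv: "bsearch_inv xs t s T lo hi r" and wide: "Suc lo < hi"
  shows "\<exists>r' lo' hi'. (step p xs ^^ 12) (loc b 2, r) = (loc b 2, r') \<and>
    bsearch_inv xs t s T lo' hi' r' \<and> hi' - lo' \<le> (hi - lo + 1) div 2 \<and> agree_outside {2..8} r r'"
proof -
  define mid where "mid = (lo + hi) div 2"
  define lo' where "lo' = (if bsearch_pred xs T s mid then mid else lo)"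
  define hi' where "hi' = (if bsearch_pred xs T s mid then hi else mid)"
  have mid: "lo < mid" "mid < hi" "1 \<le> mid" "mid \<le> length xs"
    using wide inv unfolding mid_def bsearch_inv_def by auto
  have r: "r 0 = int (length xs)" "r 1 = 1" "r t = T" "r 2 = int lo" "r 3 = int hi"
    using inv by (auto simp: bsearch_inv_def)
  have arith: "1 < int hi - int lo" "(int lo + int hi) div 2 = int mid"
    "0 \<le> int mid - 1" "int mid - 1 < int (length xs)" "nat (int mid - 1) = mid - 1"
    using wide mid unfolding mid_def by auto
  have probe: "bsearch_pred xs T s mid \<longleftrightarrow> T + (if s then int mid else 0) \<le> xs ! (mid - 1)"
    using mid unfolding bsearch_pred_def by auto
  have t': "t \<noteq> 2" "t \<noteq> 3" "t \<noteq> 4" "t \<noteq> 5" "t \<noteq> 6" "t \<noteq> 7" "t \<noteq> 8" using t by auto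
  have "\<exists>r'. (step p xs ^^ 12) (loc b 2, r) = (loc b 2, r') \<and> r' 2 = int lo' \<and>
      r' 3 = int hi' \<and> agree_outside {2..8} r r'"
  proof (cases "bsearch_pred xs T s mid")
    case True
    then show ?thesis
      using r arith t' unfolding probe lo'_def hi'_def
      by (cases s) (simp_all add: funpow_numeral funpow_one step_code_at[OF c] bsearch_code_def
          agree_outside_def)
  next
    case False
    then show ?thesis
      using r arith t' unfolding probe lo'_def hi'_def
      by (cases s) (simp_all add: funpow_numeral funpow_one step_code_at[OF c] bsearch_code_def
          agree_outside_def)
  qed
  moreover have "bsearch_inv xs t s T lo' hi' r'" if "r' 2 = int lo'" "r' 3 = int hi'"
    "agree_outside {2..8} r r'" for r'
    using that r inv mid t unfolding lo'_def hi'_def bsearch_inv_def agree_outside_def by auto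
  moreover have "hi' - lo' \<le> (hi - lo + 1) div 2" unfolding lo'_def hi'_def mid_def by auto
  ultimately show ?thesis by blast
qed

lemma bsearch_loop:
  assumes c: "code_at p b (relocate b (bsearch_code t s))" and t: "t \<notin> {2..8}"
  shows "bsearch_inv xs t s T lo hi r \<Longrightarrow> hi - lo \<le> 2 ^ k \<Longrightarrow>
    \<exists>n r' lo'. n \<le> 12 * k + 3 \<and> (step p xs ^^ n) (loc b 2, r) = (loc b 16, r') \<and> r' 2 = int lo' \<and>
      bsearch_found xs T s lo' \<and> agree_outside {2..8} r r'"
proof (induction k arbitrary: r lo hi)
  case 0
  then have "hi = Suc lo" by (auto simp: bsearch_inv_def)
  then show ?case using bsearch_exit[OF c] 0 by fastforce
next
  case (Suc k)
  show ?case
  proof (cases "hi = Suc lo")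
    case True
    then have "bsearch_inv xs t s T lo (Suc lo) r" using Suc.prems(1) by simp
    then show ?thesis using bsearch_exit[OF c] le_add2 by blast
  next
    case False
    then have "Suc lo < hi" using Suc.prems by (auto simp: bsearch_inv_def)
    then obtain r1 lo1 hi1 where r1: "(step p xs ^^ 12) (loc b 2, r) = (loc b 2, r1)"
      "bsearch_inv xs t s T lo1 hi1 r1" "hi1 - lo1 \<le> (hi - lo + 1) div 2"
      "agree_outside {2..8} r r1"
      using bsearch_halve[OF c t Suc.prems(1)] by blast
    moreover have "hi1 - lo1 \<le> 2 ^ k" using r1(3) Suc.prems(2) by simp
    ultimately obtain n r' lo' where
      "n \<le> 12 * k + 3" "(step p xs ^^ n) (loc b 2, r1) = (loc b 16, r')"
      "r' 2 = int lo'" "bsearch_found xs T s lo'" "agree_outside {2..8} r1 r'"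
      using Suc.IH by blast
    with r1 show ?thesis
      by (intro exI[of _ "n + 12"] exI[of _ r'] exI[of _ lo'])
        (auto intro: funpow_chain agree_outside_trans)
  qed
qed

lemma bsearch_run:
  assumes c: "code_at p b (relocate b (bsearch_code t s))" and t: "t \<notin> {2..8}"
    and r: "r 0 = int (length xs)" "r 1 = 1" and k: "Suc (length xs) \<le> 2 ^ k"
  shows "\<exists>n r' lo. n \<le> 12 * k + 5 \<and> (step p xs ^^ n) (loc b 0, r) = (loc b 16, r') \<and> r' 2 = int lo \<and>
    bsearch_found xs (r t) s lo \<and> agree_outside {2..8} r r'"
proof -
  define r0 where "r0 = r(2 := 0, 3 := int (length xs) + 1)"
  have start: "(step p xs ^^ 2) (loc b 0, r) = (loc b 2, r0)"
    using r by (simp add: funpow_numeral funpow_one step_code_at[OF c] bsearch_code_def r0_def)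
      (simp add: numeral_2_eq_2)
  have "bsearch_inv xs t s (r t) 0 (Suc (length xs)) r0"
    using r t by (auto simp: bsearch_inv_def bsearch_pred_def r0_def)
  then obtain n r' lo where "n \<le> 12 * k + 3" "(step p xs ^^ n) (loc b 2, r0) = (loc b 16, r')"
    "r' 2 = int lo" "bsearch_found xs (r t) s lo" "agree_outside {2..8} r0 r'"
    using bsearch_loop[OF c t] k by fastforce
  moreover have "agree_outside {2..8} r r0" by (simp add: agree_outside_def r0_def)
  ultimately show ?thesis
    using funpow_chain[OF start] agree_outside_trans by (intro exI[of _ "n + 2"]) auto
qed

section \<open>The program\<close>

text \<open>Register map of the program: 0 holds the number of parts and at the end the result, 1 the
  constant 1, 9 the constant 0; 2--8 are used by the binary searches; 11 holds \<open>m = d - 3\<close> and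
  12--14 the thresholds \<open>m + 1, m + 2, m + 3\<close>; 15--17 the column heights \<open>c0, c1, c2\<close>;
  18--41 the preprocessed row and column lengths of the two arms; 42--44 and 45--47 the border
  triples of the right and the lower arm; 70--78 the cells of the corner; the remaining
  registers are scratch space and are reset to 0 after use.\<close>

definition sub3 :: "int \<Rightarrow> nat" where
  "sub3 x = nat (x - 3)"

definition clip_code :: "nat \<Rightarrow> nat \<Rightarrow> instr list" where
  "clip_code dst src =
     [Const 56 3, Sub 57 src 56, Lt 58 9 57, Mul dst 57 58, Const 56 0, Const 57 0, Const 58 0]"

lemma run_clip_code:
  assumes "dst \<notin> {56, 57, 58}" "src \<notin> {56, 57, 58}" "r 9 = 0"
  shows "run_regs xs (clip_code dst src) r =
    r(dst := int (sub3 (r src)), 56 := 0, 57 := 0, 58 := 0)"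
  using assms by (auto simp: clip_code_def exec_regs_def fun_eq_iff sub3_def)

definition reduce_code :: "nat \<Rightarrow> nat \<Rightarrow> instr list" where
  "reduce_code dst src = [Const 56 4, Lt 57 56 src, Add 58 src 1, Par 58 58, Const 59 3,
     Add 58 58 59, Sub 58 58 src, Mul 58 58 57, Add dst src 58,
     Const 56 0, Const 57 0, Const 58 0, Const 59 0]"

lemma int_reduce_count:
  "int n + ((int n + 1) mod 2 + 3 - int n) * (if 4 < int n then 1 else 0) = int (reduce_count n)"
proof -
  have "(int n + 1) mod 2 = int ((n + 1) mod 2)" by (simp add: zmod_int add.commute)
  then show ?thesis unfolding reduce_count_def by auto
qed

lemma run_reduce_code:
  assumes "dst \<notin> {1, 56, 57, 58, 59}" "src \<notin> {56, 57, 58, 59}" "0 \<le> r src" "r 1 = 1"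
  shows "run_regs xs (reduce_code dst src) r =
    r(dst := int (reduce_count (nat (r src))), 56 := 0, 57 := 0, 58 := 0, 59 := 0)"
  using assms int_reduce_count[of "nat (r src)"]
  by (auto simp: reduce_code_def exec_regs_def fun_eq_iff algebra_simps)

definition holds_triple :: "(nat \<Rightarrow> int) \<Rightarrow> nat \<Rightarrow> nat \<times> nat \<times> nat \<Rightarrow> bool" where
  "holds_triple r X t \<longleftrightarrow>
     r X = int (fst t) \<and> r (X + 1) = int (fst (snd t)) \<and> r (X + 2) = int (snd (snd t))"

definition strip_step_code :: "nat \<Rightarrow> nat \<Rightarrow> instr list" where
  "strip_step_code k X =
     (if k = 3 then [Mex 62 (X + 2) 9, Mex 61 (X + 1) 62, Mex 60 X 61]
      else if k = 2 then [Const 62 0, Mex 61 (X + 1) 9, Mex 60 X 61]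
      else [Const 62 0, Const 61 0, Mex 60 X 9])"

text \<open>Applies \<open>strip_step k\<close> to the triple at \<open>X\<close> if \<open>t < r cnt\<close>, without branching: the
  comparison yields a flag 0 or 1 that scales the update.\<close>
definition cond_step_code :: "nat \<Rightarrow> nat \<Rightarrow> nat \<Rightarrow> nat \<Rightarrow> instr list" where
  "cond_step_code k t X cnt = [Const 56 (int t), Lt 57 56 cnt] @ strip_step_code k X @
     [Sub 63 60 X, Mul 63 63 57, Add X X 63,
      Sub 63 61 (X + 1), Mul 63 63 57, Add (X + 1) (X + 1) 63,
      Sub 63 62 (X + 2), Mul 63 63 57, Add (X + 2) (X + 2) 63,
      Const 56 0, Const 57 0, Const 60 0, Const 61 0, Const 62 0, Const 63 0]"

abbreviation arm_scratch :: "nat \<Rightarrow> nat set" where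
  "arm_scratch X \<equiv> {X, X + 1, X + 2, 56, 57, 60, 61, 62, 63}"

lemma run_cond_step_code:
  assumes X: "X = 42 \<or> X = 45" and cnt: "cnt \<in> {36..41}" and k: "k = 1 \<or> k = 2 \<or> k = 3"
    and r: "r 9 = 0" "holds_triple r X y" "r cnt = int n"
  shows "holds_triple (run_regs xs (cond_step_code k t X cnt) r) X
      (if t < n then strip_step k y else y) \<and>
    agree_outside (arm_scratch X) r (run_regs xs (cond_step_code k t X cnt) r)"
proof -
  obtain x0 x1 x2 where "y = (x0, x1, x2)" by (cases y)
  with r have "r 9 = 0" "r X = int x0" "r (X + 1) = int x1" "r (X + 2) = int x2" "r cnt = int n"
    by (simp_all add: holds_triple_def)
  with X k cnt \<open>y = (x0, x1, x2)\<close> show ?thesis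
    by (elim disjE) (simp_all add: cond_step_code_def strip_step_code_def strip_step_def Let_def
        exec_regs_def holds_triple_def agree_outside_def mex_int_of_nat
        mex_int_of_nat[of _ 0, simplified])
qed

definition strip_pow_code :: "nat \<Rightarrow> nat \<Rightarrow> nat \<Rightarrow> instr list" where
  "strip_pow_code k X cnt = concat (map (\<lambda>t. cond_step_code k t X cnt) [0..<4])"

lemma run_cond_steps_code:
  assumes X: "X = 42 \<or> X = 45" and cnt: "cnt \<in> {36..41}" and k: "k = 1 \<or> k = 2 \<or> k = 3"
    and r: "r 9 = 0" "holds_triple r X y" "r cnt = int n"
  shows "holds_triple (run_regs xs (concat (map (\<lambda>t. cond_step_code k t X cnt) [0..<j])) r) X
      ((strip_step k ^^ min n j) y) \<and>
    agree_outside (arm_scratch X) r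
      (run_regs xs (concat (map (\<lambda>t. cond_step_code k t X cnt) [0..<j])) r)"
proof (induction j)
  case (Suc j)
  let ?r = "run_regs xs (concat (map (\<lambda>t. cond_step_code k t X cnt) [0..<j])) r"
  have ih: "holds_triple ?r X ((strip_step k ^^ min n j) y)" "agree_outside (arm_scratch X) r ?r"
    using Suc.IH by auto
  have "9 \<notin> arm_scratch X" "cnt \<notin> arm_scratch X" using X cnt by auto
  then have "?r 9 = 0" "?r cnt = int n" using agree_outsideD[OF ih(2)] r by simp_all
  moreover have "(if j < n then strip_step k ((strip_step k ^^ min n j) y)
      else (strip_step k ^^ min n j) y) = (strip_step k ^^ min n (Suc j)) y"
    by (auto simp: min_def le_Suc_eq)
  ultimately show ?case
    using run_cond_step_code[OF X cnt k, of ?r "(strip_step k ^^ min n j) y" n xs j] ih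
    by (auto intro: agree_outside_trans)
qed (simp add: r agree_outside_def)

definition arm_code :: "nat \<Rightarrow> nat \<Rightarrow> instr list" where
  "arm_code X cnt =
     strip_pow_code 1 X cnt @ strip_pow_code 2 X (cnt + 1) @ strip_pow_code 3 X (cnt + 2)"

lemma run_arm_code:
  assumes X: "X = 42 \<or> X = 45" and cnt: "cnt \<in> {36..39}"
    and r: "r 9 = 0" "holds_triple r X y"
      "r cnt = int n1" "r (cnt + 1) = int n2" "r (cnt + 2) = int n3"
  shows "holds_triple (run_regs xs (arm_code X cnt) r) X
      ((strip_step 3 ^^ min n3 4) ((strip_step 2 ^^ min n2 4) ((strip_step 1 ^^ min n1 4) y))) \<and>
    agree_outside (arm_scratch X) r (run_regs xs (arm_code X cnt) r)"
proof -
  have out: "9 \<notin> arm_scratch X" "cnt + 1 \<notin> arm_scratch X" "cnt + 2 \<notin> arm_scratch X"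
    using X cnt by auto
  define r1 where "r1 = run_regs xs (strip_pow_code 1 X cnt) r"
  have r1: "holds_triple r1 X ((strip_step 1 ^^ min n1 4) y)" "agree_outside (arm_scratch X) r r1"
    using run_cond_steps_code[OF X _ _ r(1,2,3)] cnt by (simp_all add: r1_def strip_pow_code_def)
  define r2 where "r2 = run_regs xs (strip_pow_code 2 X (cnt + 1)) r1"
  have r2: "holds_triple r2 X ((strip_step 2 ^^ min n2 4) ((strip_step 1 ^^ min n1 4) y))"
    "agree_outside (arm_scratch X) r1 r2"
    using run_cond_steps_code[OF X _ _ _ r1(1)] cnt r out agree_outsideD[OF r1(2)]
    by (simp_all add: r2_def strip_pow_code_def)
  have "holds_triple (run_regs xs (strip_pow_code 3 X (cnt + 2)) r2) X
      ((strip_step 3 ^^ min n3 4) ((strip_step 2 ^^ min n2 4) ((strip_step 1 ^^ min n1 4) y))) \<and>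
    agree_outside (arm_scratch X) r2 (run_regs xs (strip_pow_code 3 X (cnt + 2)) r2)"
    using run_cond_steps_code[OF X _ _ _ r2(1)] cnt r out
      agree_outsideD[OF r1(2)] agree_outsideD[OF r2(2)]
    by (simp add: strip_pow_code_def)
  moreover have "run_regs xs (arm_code X cnt) r = run_regs xs (strip_pow_code 3 X (cnt + 2)) r2"
    by (simp add: arm_code_def r1_def r2_def)
  ultimately show ?thesis using agree_outside_trans[OF agree_outside_trans[OF r1(2) r2(2)]] by simp
qed

definition cell_code :: "nat \<Rightarrow> nat \<Rightarrow> nat \<Rightarrow> nat \<Rightarrow> nat \<Rightarrow> instr list" where
  "cell_code dst below right len j = [Mex 63 below right, Const 56 (int j), Lt 57 56 len,
     Mul dst 63 57, Const 56 0, Const 57 0, Const 63 0]"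

definition corner_code :: "instr list" where
  "corner_code =
     cell_code 78 47 44 20 2 @ cell_code 77 46 78 20 1 @ cell_code 76 45 77 20 0 @
     cell_code 75 78 43 19 2 @ cell_code 74 77 75 19 1 @ cell_code 73 76 74 19 0 @
     cell_code 72 75 42 18 2 @ cell_code 71 74 72 18 1 @ cell_code 70 73 71 18 0"

lemma run_corner_code:
  assumes "holds_triple r 42 w" "holds_triple r 45 v"
  shows "run_regs xs corner_code r 70 =
    int (corner_value (nat (r 18)) (nat (r 19)) (nat (r 20)) w v)"
proof -
  have flag: "int m * (if c then 1 else 0) = int (if c then m else 0)" for m c by simp
  obtain w0 w1 w2 v0 v1 v2 where "w = (w0, w1, w2)" "v = (v0, v1, v2)" by (cases w, cases v)
  with assms show ?thesis
    by (simp add: holds_triple_def corner_code_def cell_code_def corner_value_def Let_def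
        exec_regs_def mex_int_of_nat flag zless_nat_eq_int_zless)
qed

definition read_code :: "instr list" where
  "read_code = [Read 54 11, Sub 18 54 11, Add 55 11 1, Read 54 55, Sub 19 54 11, Const 56 2,
     Add 55 11 56, Read 54 55, Sub 20 54 11, Sub 21 15 11, Sub 22 16 11, Sub 23 17 11,
     Const 54 0, Const 55 0, Const 56 0]"

lemma run_read_code:
  assumes "r 11 = int m" "r 1 = 1"
  shows "run_regs (map int l) read_code r 18 = int (entry l m) - int m \<and>
    run_regs (map int l) read_code r 19 = int (entry l (m + 1)) - int m \<and>
    run_regs (map int l) read_code r 20 = int (entry l (m + 2)) - int m \<and>
    run_regs (map int l) read_code r 21 = r 15 - int m \<and>
    run_regs (map int l) read_code r 22 = r 16 - int m \<and>
    run_regs (map int l) read_code r 23 = r 17 - int m \<and>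
    agree_outside ({18..23} \<union> {54, 55, 56}) r (run_regs (map int l) read_code r)"
proof -
  have "nat (int m + 1) = m + 1" "nat (int m + 2) = m + 2" by simp_all
  with assms show ?thesis
    by (auto simp: read_code_def exec_regs_def entry_def agree_outside_def)
qed

definition prep_code :: "instr list" where
  "prep_code = clip_code 24 18 @ clip_code 25 19 @ clip_code 26 20 @ clip_code 27 21 @
     clip_code 28 22 @ clip_code 29 23 @
     [Sub 30 24 25, Sub 31 25 26, Mov 32 26, Sub 33 27 28, Sub 34 28 29, Mov 35 29] @
     reduce_code 36 30 @ reduce_code 37 31 @ reduce_code 38 32 @ reduce_code 39 33 @
     reduce_code 40 34 @ reduce_code 41 35 @
     [Const 42 0, Const 43 0, Const 44 0, Const 45 0, Const 46 0, Const 47 0]"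

lemma run_prep_code:
  assumes r: "r 9 = 0" "r 1 = 1"
    and mono: "sub3 (r 19) \<le> sub3 (r 18)" "sub3 (r 20) \<le> sub3 (r 19)"
      "sub3 (r 22) \<le> sub3 (r 21)" "sub3 (r 23) \<le> sub3 (r 22)"
  shows "run_regs xs prep_code r 36 = int (reduce_count (sub3 (r 18) - sub3 (r 19))) \<and>
    run_regs xs prep_code r 37 = int (reduce_count (sub3 (r 19) - sub3 (r 20))) \<and>
    run_regs xs prep_code r 38 = int (reduce_count (sub3 (r 20))) \<and>
    run_regs xs prep_code r 39 = int (reduce_count (sub3 (r 21) - sub3 (r 22))) \<and>
    run_regs xs prep_code r 40 = int (reduce_count (sub3 (r 22) - sub3 (r 23))) \<and>
    run_regs xs prep_code r 41 = int (reduce_count (sub3 (r 23))) \<and>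
    holds_triple (run_regs xs prep_code r) 42 (0, 0, 0) \<and>
    holds_triple (run_regs xs prep_code r) 45 (0, 0, 0) \<and>
    agree_outside ({24..47} \<union> {56..59}) r (run_regs xs prep_code r)"
proof -
  have "nat (int a - int b) = a - b" for a b by simp
  then show ?thesis
    using assms by (simp add: prep_code_def run_clip_code run_reduce_code exec_regs_def
        holds_triple_def agree_outside_def)
qed

definition eval_code :: "instr list" where
  "eval_code = read_code @ prep_code @ arm_code 42 36 @ arm_code 45 39 @ corner_code @ [Mov 0 70]"

lemma run_read_prep_code:
  assumes r: "r 9 = 0" "r 1 = 1" "r 11 = int m" "r 15 = int c0" "r 16 = int c1" "r 17 = int c2"
    and c: "c1 \<le> c0" "c2 \<le> c1" and l: "sorted_wrt (\<ge>) l"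
    and e: "e0 = entry l m" "e1 = entry l (m + 1)" "e2 = entry l (m + 2)"
  defines "r' \<equiv> run_regs (map int l) (read_code @ prep_code) r"
  shows "r' 9 = 0 \<and> r' 18 = int e0 - int m \<and> r' 19 = int e1 - int m \<and> r' 20 = int e2 - int m \<and>
    r' 36 = int (reduce_count ((e0 - m - 3) - (e1 - m - 3))) \<and>
    r' 37 = int (reduce_count ((e1 - m - 3) - (e2 - m - 3))) \<and>
    r' 38 = int (reduce_count (e2 - m - 3)) \<and>
    r' 39 = int (reduce_count ((c0 - m - 3) - (c1 - m - 3))) \<and>
    r' 40 = int (reduce_count ((c1 - m - 3) - (c2 - m - 3))) \<and>
    r' 41 = int (reduce_count (c2 - m - 3)) \<and>
    holds_triple r' 42 (0, 0, 0) \<and> holds_triple r' 45 (0, 0, 0)"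
proof -
  have sub3: "sub3 (int a - int m) = a - m - 3" for a unfolding sub3_def by simp
  define r1 where "r1 = run_regs (map int l) read_code r"
  have r1: "r1 18 = int e0 - int m" "r1 19 = int e1 - int m" "r1 20 = int e2 - int m"
    "r1 21 = int c0 - int m" "r1 22 = int c1 - int m" "r1 23 = int c2 - int m" "r1 9 = 0" "r1 1 = 1"
    using run_read_code[OF r(3,2), of l] r unfolding r1_def e by (auto simp: agree_outside_def)
  have "e1 \<le> e0" "e2 \<le> e1" unfolding e using entry_antimono[OF l] by auto
  then have "sub3 (r1 19) \<le> sub3 (r1 18)" "sub3 (r1 20) \<le> sub3 (r1 19)"
    "sub3 (r1 22) \<le> sub3 (r1 21)" "sub3 (r1 23) \<le> sub3 (r1 22)"
    unfolding r1 sub3 using c by (simp_all add: diff_le_mono)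
  moreover have "r' = run_regs (map int l) prep_code r1" by (simp add: r'_def r1_def)
  ultimately show ?thesis
    using run_prep_code[OF r1(7,8)] r1 by (simp add: sub3 agree_outside_def)
qed

lemma run_eval_code:
  assumes r: "r 9 = 0" "r 1 = 1" "r 11 = int m" "r 15 = int c0" "r 16 = int c1" "r 17 = int c2"
    and c: "c1 \<le> c0" "c2 \<le> c1" and l: "sorted_wrt (\<ge>) l"
  shows "run_regs (map int l) eval_code r 0 =
    int (corner_value (entry l m - m) (entry l (m + 1) - m) (entry l (m + 2) - m)
      (arm_border (entry l m - m) (entry l (m + 1) - m) (entry l (m + 2) - m))
      (arm_border (c0 - m) (c1 - m) (c2 - m)))"
proof -
  let ?xs = "map int l"
  define e0 e1 e2 where "e0 = entry l m" "e1 = entry l (m + 1)" "e2 = entry l (m + 2)"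
  define r2 where "r2 = run_regs ?xs (read_code @ prep_code) r"
  note prep = run_read_prep_code[OF r c l e0_e1_e2_def, folded r2_def]
  have reduced: "min (reduce_count n) 4 = reduce_count n" for n by (simp add: reduce_count_le_4)
  define r3 where "r3 = run_regs ?xs (arm_code 42 36) r2"
  have arm1: "holds_triple r3 42 (arm_border (e0 - m) (e1 - m) (e2 - m))"
    "agree_outside (arm_scratch 42) r2 r3"
    using run_arm_code[of 42 36 r2 "(0, 0, 0)" "reduce_count ((e0 - m - 3) - (e1 - m - 3))"
        "reduce_count ((e1 - m - 3) - (e2 - m - 3))" "reduce_count (e2 - m - 3)" ?xs] prep
    unfolding r3_def by (simp_all add: reduced arm_border_reduce_count)
  define r4 where "r4 = run_regs ?xs (arm_code 45 39) r3"
  have "holds_triple r3 45 (0, 0, 0)" "r3 9 = 0" "r3 39 = r2 39" "r3 40 = r2 40" "r3 41 = r2 41"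
    using agree_outsideD[OF arm1(2)] prep by (auto simp: holds_triple_def)
  then have arm2: "holds_triple r4 45 (arm_border (c0 - m) (c1 - m) (c2 - m))"
    "agree_outside (arm_scratch 45) r3 r4"
    using run_arm_code[of 45 39 r3 "(0, 0, 0)" "reduce_count ((c0 - m - 3) - (c1 - m - 3))"
        "reduce_count ((c1 - m - 3) - (c2 - m - 3))" "reduce_count (c2 - m - 3)" ?xs] prep
    unfolding r4_def by (simp_all add: reduced arm_border_reduce_count)
  have corner: "holds_triple r4 42 (arm_border (e0 - m) (e1 - m) (e2 - m))"
    "nat (r4 18) = e0 - m" "nat (r4 19) = e1 - m" "nat (r4 20) = e2 - m"
    using agree_outsideD[OF arm2(2)] agree_outsideD[OF arm1(2)] arm1(1) prep
    by (auto simp: holds_triple_def)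
  then show ?thesis
    using run_corner_code[OF corner(1) arm2(1), of ?xs]
    by (simp add: eval_code_def r4_def r3_def r2_def exec_regs_def e0_e1_e2_def)
qed

definition offset_code :: "instr list" where
  "offset_code = [Const 50 3, Sub 51 2 50, Lt 52 9 51, Mul 11 51 52, Add 12 11 1, Const 50 2,
     Add 13 11 50, Const 50 3, Add 14 11 50]"

lemma run_offset_code:
  assumes "r 2 = int d" "r 9 = 0" "r 1 = 1"
  shows "run_regs xs offset_code r 11 = int (d - 3) \<and>
    run_regs xs offset_code r 12 = int (d - 3 + 1) \<and>
    run_regs xs offset_code r 13 = int (d - 3 + 2) \<and>
    run_regs xs offset_code r 14 = int (d - 3 + 3) \<and>
    agree_outside ({11..14} \<union> {50..52}) r (run_regs xs offset_code r)"
proof -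
  have "(int d - 3) * (if 0 < int d - 3 then 1 else 0) = int (d - 3)" by auto
  with assms show ?thesis by (simp add: offset_code_def exec_regs_def agree_outside_def)
qed

definition count_code :: "nat \<Rightarrow> nat \<Rightarrow> instr list" where
  "count_code t q = bsearch_code t False @ [Mov q 2]"

lemma length_count_code [simp]: "length (count_code t q) = 17"
  by (simp add: count_code_def)

lemma bsearch_found_Durfee:
  assumes l: "sorted_wrt (\<ge>) l" and found: "bsearch_found (map int l) 0 True d"
  shows "\<And>i. i < d \<Longrightarrow> i < entry l i" "\<not> d < entry l d"
proof -
  have d: "d \<le> length l" "0 < d \<Longrightarrow> d \<le> l ! (d - 1)"
    using found by (auto simp: bsearch_found_def bsearch_pred_def)
  show "i < entry l i" if "i < d" for i
  proof -
    have "i \<le> d - 1" "i < length l" "d - 1 < length l" "d \<le> l ! (d - 1)" using d that by auto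
    then show ?thesis using that entry_antimono[OF l \<open>i \<le> d - 1\<close>] by (simp add: entry_def)
  qed
  show "\<not> d < entry l d"
    using found d(1) by (auto simp: bsearch_found_def bsearch_pred_def entry_def Suc_le_eq)
qed

lemma bsearch_found_column:
  assumes l: "sorted_wrt (\<ge>) l" and found: "bsearch_found (map int l) (int T) False c" and "0 < T"
  shows "i < c \<longleftrightarrow> T \<le> entry l i"
proof
  have c: "c \<le> length l" "0 < c \<Longrightarrow> T \<le> l ! (c - 1)"
    using found by (auto simp: bsearch_found_def bsearch_pred_def)
  show "T \<le> entry l i" if "i < c"
  proof -
    have "i \<le> c - 1" "i < length l" "c - 1 < length l" "T \<le> l ! (c - 1)" using c that by auto
    then show ?thesis using that entry_antimono[OF l \<open>i \<le> c - 1\<close>] by (simp add: entry_def)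
  qed
  show "i < c" if "T \<le> entry l i"
  proof (rule ccontr)
    assume "\<not> i < c"
    then have "entry l i \<le> entry l c" using entry_antimono[OF l] by simp
    moreover have "entry l c < T"
      using found c(1) \<open>0 < T\<close>
      by (auto simp: bsearch_found_def bsearch_pred_def entry_def Suc_le_eq)
    ultimately show False using that by simp
  qed
qed

lemma run_count_code:
  assumes c: "code_at p b (relocate b (count_code t q))" and t: "t \<notin> {2..8}"
    and r: "r 0 = int (length l)" "r 1 = 1" "r t = int T" "0 < T"
    and l: "sorted_wrt (\<ge>) l" and k: "Suc (length l) \<le> 2 ^ k"
  shows "\<exists>n r' c. n \<le> 12 * k + 6 \<and> (step p (map int l) ^^ n) (loc b 0, r) = (loc (b + 17) 0, r') \<and>
    r' q = int c \<and> (\<forall>i. i < c \<longleftrightarrow> T \<le> entry l i) \<and> agree_outside ({2..8} \<union> {q}) r r'"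
proof -
  have "relocate b (count_code t q) = relocate b (bsearch_code t False) @ [Mov q 2]"
    by (simp add: count_code_def relocate_def)
  then have search: "code_at p b (relocate b (bsearch_code t False))"
    and mov: "code_at p (b + 16) [Mov q 2]"
    using c by (simp_all add: code_at_append)
  obtain n r' c where
    n: "n \<le> 12 * k + 5" "(step p (map int l) ^^ n) (loc b 0, r) = (loc (b + 16) 0, r')"
    "r' 2 = int c" "bsearch_found (map int l) (int T) False c" "agree_outside {2..8} r r'"
    using bsearch_run[OF search t, of r "map int l" k] r k by (auto simp: loc_def)
  have "(step p (map int l) ^^ 1) (loc (b + 16) 0, r') = (loc (b + 16) 1, r'(q := int c))"
    using steps_sequential[OF mov, of "map int l" r'] n(3) by (simp add: exec_regs_def)
  then have "(step p (map int l) ^^ (1 + n)) (loc b 0, r) = (loc (b + 16) 1, r'(q := int c))"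
    by (rule funpow_chain[OF n(2)])
  moreover have "agree_outside ({2..8} \<union> {q}) r (r'(q := int c))"
    using n(5) by (auto simp: agree_outside_def)
  moreover have "1 + n \<le> 12 * k + 6" using n(1) by simp
  moreover have "loc (b + 16) 1 = loc (b + 17) 0" by (simp add: loc_def)
  ultimately show ?thesis using bsearch_found_column[OF l n(4) r(4)] by fastforce
qed

definition sg_program :: "instr list" where
  "sg_program = [Const 1 1] @ relocate 1 (bsearch_code 9 True) @ offset_code @
     relocate 26 (count_code 12 15) @ relocate 43 (count_code 13 16) @
     relocate 60 (count_code 14 17) @ eval_code"

lemma sg_program_segments:
  "code_at sg_program 0 [Const 1 1]" "code_at sg_program 1 (relocate 1 (bsearch_code 9 True))"
  "code_at sg_program 17 offset_code" "code_at sg_program 26 (relocate 26 (count_code 12 15))"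
  "code_at sg_program 43 (relocate 43 (count_code 13 16))"
  "code_at sg_program 60 (relocate 60 (count_code 14 17))" "code_at sg_program 77 eval_code"
  "length sg_program = 77 + length eval_code"
  using code_at_self[of sg_program] unfolding sg_program_def
  by (simp_all only: code_at_append) (simp_all add: offset_code_def)

lemma sg_program_Durfee:
  assumes l: "sorted_wrt (\<ge>) lam" and k: "Suc (length lam) \<le> 2 ^ k"
  shows "\<exists>T r d. T \<le> 12 * k + 15 \<and>
    (step sg_program (map int lam) ^^ T) (init (map int lam)) = (26, r) \<and>
    r 0 = int (length lam) \<and> r 1 = 1 \<and> r 9 = 0 \<and> r 11 = int (d - 3) \<and> r 12 = int (d - 3 + 1) \<and>
    r 13 = int (d - 3 + 2) \<and> r 14 = int (d - 3 + 3) \<and>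
    (\<forall>i < d. i < entry lam i) \<and> \<not> d < entry lam d"
proof -
  let ?xs = "map int lam" and ?f = "step sg_program (map int lam)"
  note seg = sg_program_segments
  define r0 :: "nat \<Rightarrow> int" where "r0 = (\<lambda>_. 0)(0 := int (length lam), 1 := 1)"
  have "init ?xs = (loc 0 0, (\<lambda>_. 0)(0 := int (length lam)))" by (simp add: init_def loc_def)
  then have start: "(?f ^^ 1) (init ?xs) = (1, r0)"
    using steps_sequential[OF seg(1), of ?xs] by (simp add: exec_regs_def r0_def loc_def)
  obtain n r1 d where search: "n \<le> 12 * k + 5" "(?f ^^ n) (1, r0) = (17, r1)" "r1 2 = int d"
    "bsearch_found ?xs 0 True d" "agree_outside {2..8} r0 r1"
    using bsearch_run[OF seg(2), of r0 ?xs k] k by (auto simp: r0_def loc_def)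
  have r1: "r1 0 = int (length lam)" "r1 1 = 1" "r1 9 = 0"
    using agree_outsideD[OF search(5)] by (simp_all add: r0_def)
  define r2 where "r2 = run_regs ?xs offset_code r1"
  have "length offset_code = 9" "list_all sequential offset_code" by (simp_all add: offset_code_def)
  then have "(?f ^^ 9) (17, r1) = (26, r2)"
    using steps_sequential[OF seg(3), of ?xs r1] by (simp add: r2_def loc_def)
  then have "(?f ^^ (9 + (n + 1))) (init ?xs) = (26, r2)"
    by (rule funpow_chain[OF funpow_chain[OF start search(2)]])
  moreover have "r2 0 = int (length lam)" "r2 1 = 1" "r2 9 = 0" "r2 11 = int (d - 3)"
    "r2 12 = int (d - 3 + 1)" "r2 13 = int (d - 3 + 2)" "r2 14 = int (d - 3 + 3)"
    using run_offset_code[OF search(3) r1(3,2), of ?xs] r1 unfolding r2_def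
    by (auto simp: agree_outside_def)
  moreover have "9 + (n + 1) \<le> 12 * k + 15" using search(1) by simp
  ultimately show ?thesis using bsearch_found_Durfee[OF l search(4)] by blast
qed

lemma sg_program_columns:
  assumes l: "sorted_wrt (\<ge>) lam" and k: "Suc (length lam) \<le> 2 ^ k"
    and r: "r 0 = int (length lam)" "r 1 = 1" "r 9 = 0" "r 11 = int m" "r 12 = int (m + 1)"
      "r 13 = int (m + 2)" "r 14 = int (m + 3)"
  shows "\<exists>T r' c. T \<le> 36 * k + 18 \<and> (step sg_program (map int lam) ^^ T) (26, r) = (77, r') \<and>
    r' 1 = 1 \<and> r' 9 = 0 \<and> r' 11 = int m \<and>
    r' 15 = int (c 0) \<and> r' 16 = int (c 1) \<and> r' 17 = int (c 2) \<and>
    (\<forall>j i. j < 3 \<longrightarrow> (i < c j \<longleftrightarrow> m + j + 1 \<le> entry lam i))"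
proof -
  let ?f = "step sg_program (map int lam)"
  note seg = sg_program_segments
  obtain n0 r0 c0 where s0: "n0 \<le> 12 * k + 6" "(?f ^^ n0) (26, r) = (43, r0)" "r0 15 = int c0"
    "\<forall>i. i < c0 \<longleftrightarrow> m + 1 \<le> entry lam i" "agree_outside ({2..8} \<union> {15}) r r0"
    using run_count_code[OF seg(4) _ r(1,2,5) _ l k] by (auto simp: loc_def)
  then have r0: "r0 0 = int (length lam)" "r0 1 = 1" "r0 13 = int (m + 2)"
    using agree_outsideD[OF s0(5)] r by auto
  obtain n1 r1 c1 where s1: "n1 \<le> 12 * k + 6" "(?f ^^ n1) (43, r0) = (60, r1)" "r1 16 = int c1"
    "\<forall>i. i < c1 \<longleftrightarrow> m + 2 \<le> entry lam i" "agree_outside ({2..8} \<union> {16}) r0 r1"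
    using run_count_code[OF seg(5) _ r0 _ l k] by (auto simp: loc_def)
  have r1: "r1 0 = int (length lam)" "r1 1 = 1" "r1 14 = int (m + 3)"
    using agree_outsideD[OF s1(5)] agree_outsideD[OF s0(5)] r r0 by auto
  obtain n2 r2 c2 where s2: "n2 \<le> 12 * k + 6" "(?f ^^ n2) (60, r1) = (77, r2)" "r2 17 = int c2"
    "\<forall>i. i < c2 \<longleftrightarrow> m + 3 \<le> entry lam i" "agree_outside ({2..8} \<union> {17}) r1 r2"
    using run_count_code[OF seg(6) _ r1 _ l k] by (auto simp: loc_def)
  define c where "c j = (if j = 0 then c0 else if j = 1 then c1 else c2)" for j :: nat
  have "(?f ^^ (n2 + (n1 + n0))) (26, r) = (77, r2)"
    by (rule funpow_chain[OF funpow_chain[OF s0(2) s1(2)] s2(2)])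
  moreover have "\<forall>j i. j < 3 \<longrightarrow> (i < c j \<longleftrightarrow> m + j + 1 \<le> entry lam i)"
    using s0(4) s1(4) s2(4) by (auto simp: c_def less_Suc_eq numeral_eq_Suc)
  moreover have "r2 1 = 1" "r2 9 = 0" "r2 11 = int m" "r2 15 = int (c 0)" "r2 16 = int (c 1)"
    "r2 17 = int (c 2)"
    using agree_outsideD[OF s2(5)] agree_outsideD[OF s1(5)] agree_outsideD[OF s0(5)]
      r s0(3) s1(3) s2(3)
    by (auto simp: c_def)
  moreover have "n2 + (n1 + n0) \<le> 36 * k + 18" using s0(1) s1(1) s2(1) by simp
  ultimately show ?thesis by blast
qed

lemma sequential_eval_code: "list_all sequential eval_code"
  by (auto simp: list_all_iff eval_code_def read_code_def prep_code_def clip_code_def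
      reduce_code_def arm_code_def strip_pow_code_def cond_step_code_def strip_step_code_def
      corner_code_def cell_code_def)

lemma sg_program_run:
  assumes lam: "is_partition n lam" and k: "Suc (length lam) \<le> 2 ^ k"
  shows "\<exists>T. T \<le> 48 * k + 33 + length eval_code \<and>
    runs_within sg_program (map int lam) T (int (sg lam))"
proof -
  let ?xs = "map int lam" and ?f = "step sg_program (map int lam)"
  have l: "sorted_wrt (\<ge>) lam" using lam by (simp add: is_partition_def)
  obtain T1 r1 d where durfee: "T1 \<le> 12 * k + 15" "(?f ^^ T1) (init ?xs) = (26, r1)"
    "r1 0 = int (length lam)" "r1 1 = 1" "r1 9 = 0" "r1 11 = int (d - 3)" "r1 12 = int (d - 3 + 1)"
    "r1 13 = int (d - 3 + 2)" "r1 14 = int (d - 3 + 3)"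
    "\<And>i. i < d \<Longrightarrow> i < entry lam i" "\<not> d < entry lam d"
    using sg_program_Durfee[OF l k] by blast
  obtain T2 r2 c where columns: "T2 \<le> 36 * k + 18" "(?f ^^ T2) (26, r1) = (77, r2)"
    "r2 1 = 1" "r2 9 = 0" "r2 11 = int (d - 3)"
    "r2 15 = int (c 0)" "r2 16 = int (c 1)" "r2 17 = int (c 2)"
    "\<And>j i. j < 3 \<Longrightarrow> i < c j \<longleftrightarrow> d - 3 + j + 1 \<le> entry lam i"
    using sg_program_columns[OF l k durfee(3-9)] by blast
  have "c (Suc j) \<le> c j" if "j < 2" for j
    using columns(9)[of j "c j"] columns(9)[of "Suc j" "c j"] that by (cases "c (Suc j) \<le> c j") auto
  then have "run_regs ?xs eval_code r2 0 = int (sg lam)"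
    using run_eval_code[OF columns(4,3,5-8) _ _ l]
      sg_eq_corner_value[OF lam durfee(10,11) columns(9)]
    by (simp add: numeral_eq_Suc)
  moreover have "(?f ^^ length eval_code) (77, r2) = (length sg_program, run_regs ?xs eval_code r2)"
    using steps_sequential[OF sg_program_segments(7) sequential_eval_code, of ?xs r2]
    by (simp add: loc_def sg_program_segments(8))
  ultimately have "runs_within sg_program ?xs (length eval_code + (T2 + T1)) (int (sg lam))"
    using funpow_chain[OF funpow_chain[OF durfee(2) columns(2)]]
    unfolding runs_within_def halted_def by fastforce
  then show ?thesis
    using durfee(1) columns(1) by (intro exI[of _ "length eval_code + (T2 + T1)"]) simp
qed

lemma length_le_sum_list: "\<forall>x\<in>set l. 0 < (x::nat) \<Longrightarrow> length l \<le> sum_list l"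
  by (induction l) auto

lemma exists_pow2_log_bound:
  assumes "1 \<le> N"
  shows "\<exists>k. Suc N \<le> 2 ^ k \<and> real k \<le> 1 + log 2 (real N)"
proof -
  define k where "k = (LEAST k. N < 2 ^ k)"
  have "N < 2 ^ k" unfolding k_def by (rule LeastI[of _ N]) (rule less_exp)
  moreover have "k \<noteq> 0" using calculation assms by (cases k) auto
  moreover have "\<not> N < 2 ^ (k - 1)"
    unfolding k_def by (rule not_less_Least) (use \<open>k \<noteq> 0\<close> in \<open>simp add: k_def\<close>)
  then have "log 2 ((2::real) ^ (k - 1)) \<le> log 2 (real N)"
    using assms by (subst log_le_cancel_iff) (auto simp flip: of_nat_power)
  ultimately show ?thesis by (intro exI[of _ k]) (simp add: of_nat_diff)
qed

lemma sg_program_log_time: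
  assumes lam: "is_partition n lam" and "1 \<le> n"
  shows "\<exists>T. runs_within sg_program (map int lam) T (int (sg lam)) \<and>
    real T \<le> (81 + real (length eval_code)) * (1 + log 2 (length lam))"
proof -
  have len: "1 \<le> length lam" using assms by (cases lam) (auto simp: is_partition_def)
  obtain k where k: "Suc (length lam) \<le> 2 ^ k" "real k \<le> 1 + log 2 (length lam)"
    using exists_pow2_log_bound[OF len] by blast
  obtain T where T: "T \<le> 48 * k + 33 + length eval_code"
    "runs_within sg_program (map int lam) T (int (sg lam))"
    using sg_program_run[OF lam k(1)] by blast
  have log: "0 \<le> log 2 (length lam)" using len by (subst zero_le_log_cancel_iff) auto
  have "real T \<le> 48 * real k + 33 + real (length eval_code)" using T(1) by linarith
  also have "\<dots> \<le> 48 * (1 + log 2 (length lam)) + 33 + real (length eval_code)" using k(2) by simp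
  finally have "real T \<le> (81 + real (length eval_code)) * (1 + log 2 (length lam))"
    using log mult_nonneg_nonneg[OF _ log, of "real (length eval_code)"] unfolding ring_distribs
    by linarith
  with T(2) show ?thesis by blast
qed

theorem mainTheorem15:
  "\<exists>(p :: instr list) (C :: real). \<forall>(n :: nat) (lam :: nat list).
     1 \<le> n \<and> is_partition n lam \<longrightarrow>
     (\<exists>T. runs_within p (map int lam) T (int (sg lam)) \<and>
          real T \<le> C * (1 + log 2 (real (length lam))) \<and>
          real T \<le> C * (1 + log 2 (real n)))"
proof (intro exI[of _ sg_program] exI[of _ "81 + real (length eval_code)"] allI impI)
  fix n :: nat and lam :: "nat list"
  assume "1 \<le> n \<and> is_partition n lam"
  then have lam: "is_partition n lam" and "1 \<le> n" by auto
  then obtain T where T: "runs_within sg_program (map int lam) T (int (sg lam))"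
    "real T \<le> (81 + real (length eval_code)) * (1 + log 2 (length lam))"
    using sg_program_log_time by blast
  have "1 \<le> length lam" "length lam \<le> n"
    using lam \<open>1 \<le> n\<close> length_le_sum_list[of lam] by (cases lam, auto simp: is_partition_def)
  then have "log 2 (length lam) \<le> log 2 n" by (subst log_le_cancel_iff) auto
  then have "(81 + real (length eval_code)) * (1 + log 2 (length lam)) \<le>
      (81 + real (length eval_code)) * (1 + log 2 n)"
    by (intro mult_left_mono) auto
  with T show "\<exists>T. runs_within sg_program (map int lam) T (int (sg lam)) \<and>
      real T \<le> (81 + real (length eval_code)) * (1 + log 2 (real (length lam))) \<and>
      real T \<le> (81 + real (length eval_code)) * (1 + log 2 (real n))"
    by (meson order_trans)
qed

end
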